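(* Let $m_1,m_2\in\{m_L,m_R\}$. Then both cutoff profiles $(\xi_L(m_1,m_2),\xi_L(m_2,m_1))$ and $(\xi_R(m_1,m_2),\xi_R(m_2,m_1))$ are strict equilibria and neighborhood invader strategy profiles of the induced game $\Gamma(F_{m_1},F_{m_2})$.
   Context: Two players; types drawn independently from a distribution on $[0,1]$ with continuous CDF $F$ and density $f>0$ on $[0,1]$; each chooses $L$ or $R$; a type-$u$ player gets $1-u$ if both choose $L$, $u$ if both choose $R$, $0$ otherwise. Players first send messages via the message function $\mu^*$: type $u$ sends $m_L$ if $u\le1/2$ and $m_R$ if $u>1/2$. $F_{m_L}$ is $F$ conditioned on $[0,1/2]$ and $F_{m_R}$ is $F$ conditioned on $(1/2,1]$. $\xi_L(m,m')=0$ if $m=m'=m_R$ and $1$ otherwise; $\xi_R(m,m')=1$ if $m=m'=m_L$ and $0$ otherwise. Induced game $\Gamma(F_{m_1},F_{m_2})$: player $i\in\{1,2\}$ has type drawn from $F_{m_i}$ (independently) and chooses a cutoff $x_i\in[0,1]$, playing $L$ iff her type $\le x_i$. $\pi^{m_1,m_2}(x_1,x_2)=\int[\mathbf 1\{u\le x_1\}(1-u)F_{m_2}(x_2)+\mathbf 1\{u>x_1\}u(1-F_{m_2}(x_2))]dF_{m_1}(u)$ is player 1's expected payoff; $\pi^{m_2,m_1}(x_2,x_1)$ is player 2's. Cutoffs $x_i,x_i'$ of player $i$ are equivalent ($x_i\approx x_i'$) if $F_{m_i}(x_i)=F_{m_i}(x_i')$. $(x_1,x_2)$ is a strict equilibrium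 if $\pi^{m_1,m_2}(x_1',x_2)\ge\pi^{m_1,m_2}(x_1,x_2)$ implies $x_1'\approx x_1$ and $\pi^{m_2,m_1}(x_2',x_1)\ge\pi^{m_2,m_1}(x_2,x_1)$ implies $x_2'\approx x_2$. A strict equilibrium $(x_1,x_2)$ is a neighborhood invader strategy profile if there exists $\epsilon>0$ such that for every $(x_1',x_2')$ with $x_1'\not\approx x_1$, $x_2'\not\approx x_2$, $|x_1'-x_1|<\epsilon$, $|x_2'-x_2|<\epsilon$, either $\pi^{m_1,m_2}(x_1,x_2')>\pi^{m_1,m_2}(x_1',x_2')$ or $\pi^{m_2,m_1}(x_2,x_1')>\pi^{m_2,m_1}(x_2',x_1')$. *)

theory Defs
  imports "HOL-Analysis.Analysis"
begin

text \<open>The type distribution has density f on [0,1] (f > 0 there, total mass 1);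
  F u = integral of f over [0,1] intersected with (-inf,u].  Expectations dF are
  integrals against the density.\<close>

datatype msg = mL | mR

definition msg_set :: "msg \<Rightarrow> real set" where
  "msg_set m = (case m of mL \<Rightarrow> {0..1/2} | mR \<Rightarrow> {1/2<..1})"

definition cdf :: "(real \<Rightarrow> real) \<Rightarrow> real \<Rightarrow> real" where
  "cdf f x = integral ({0..1} \<inter> {..x}) f"

definition msg_mass :: "(real \<Rightarrow> real) \<Rightarrow> msg \<Rightarrow> real" where
  "msg_mass f m = integral (msg_set m) f"

definition cond_cdf :: "(real \<Rightarrow> real) \<Rightarrow> msg \<Rightarrow> real \<Rightarrow> real" where
  "cond_cdf f m x = integral (msg_set m \<inter> {..x}) f / msg_mass f m"

text \<open>pi^{m1,m2}(x1,x2): expected payoff of a player of type drawn from F_{m1}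
  using cutoff x1 against an opponent of type drawn from F_{m2} using cutoff x2.\<close>
definition payoff :: "(real \<Rightarrow> real) \<Rightarrow> msg \<Rightarrow> msg \<Rightarrow> real \<Rightarrow> real \<Rightarrow> real" where
  "payoff f m1 m2 x1 x2 =
     integral (msg_set m1)
       (\<lambda>u. ((if u \<le> x1 then (1 - u) * cond_cdf f m2 x2 else u * (1 - cond_cdf f m2 x2)) * f u))
     / msg_mass f m1"

definition equiv_cutoff :: "(real \<Rightarrow> real) \<Rightarrow> msg \<Rightarrow> real \<Rightarrow> real \<Rightarrow> bool" where
  "equiv_cutoff f m x x' \<longleftrightarrow> cond_cdf f m x = cond_cdf f m x'"

definition strict_equilibrium :: "(real \<Rightarrow> real) \<Rightarrow> msg \<Rightarrow> msg \<Rightarrow> real \<Rightarrow> real \<Rightarrow> bool" where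
  "strict_equilibrium f m1 m2 x1 x2 \<longleftrightarrow>
     x1 \<in> {0..1} \<and> x2 \<in> {0..1} \<and>
     (\<forall>x1'\<in>{0..1}. payoff f m1 m2 x1' x2 \<ge> payoff f m1 m2 x1 x2 \<longrightarrow> equiv_cutoff f m1 x1' x1) \<and>
     (\<forall>x2'\<in>{0..1}. payoff f m2 m1 x2' x1 \<ge> payoff f m2 m1 x2 x1 \<longrightarrow> equiv_cutoff f m2 x2' x2)"

definition NIS :: "(real \<Rightarrow> real) \<Rightarrow> msg \<Rightarrow> msg \<Rightarrow> real \<Rightarrow> real \<Rightarrow> bool" where
  "NIS f m1 m2 x1 x2 \<longleftrightarrow>
     strict_equilibrium f m1 m2 x1 x2 \<and>
     (\<exists>\<epsilon>>0. \<forall>x1'\<in>{0..1}. \<forall>x2'\<in>{0..1}.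
        \<not> equiv_cutoff f m1 x1' x1 \<and> \<not> equiv_cutoff f m2 x2' x2 \<and>
        \<bar>x1' - x1\<bar> < \<epsilon> \<and> \<bar>x2' - x2\<bar> < \<epsilon> \<longrightarrow>
        payoff f m1 m2 x1 x2' > payoff f m1 m2 x1' x2' \<or>
        payoff f m2 m1 x2 x1' > payoff f m2 m1 x2' x1')"

definition xiL :: "msg \<Rightarrow> msg \<Rightarrow> real" where
  "xiL m m' = (if m = mR \<and> m' = mR then 0 else 1)"

definition xiR :: "msg \<Rightarrow> msg \<Rightarrow> real" where
  "xiR m m' = (if m = mL \<and> m' = mL then 1 else 0)"

end

theory Submission
  imports Defs
begin

text \<open>The types sending a message form an interval (up to an endpoint) on which the density is
  positive. So a cutoff is equivalent to 1 exactly when it lies above that interval and to 0 exactly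
  when it lies below it; the same strict monotonicity, applied to the weights \<open>(1 - u) f u\<close> and
  \<open>u f u\<close>, shows that against an opponent who surely plays \<open>L\<close> (resp. \<open>R\<close>) every best
  response is equivalent to the cutoff 1 (resp. 0). The invasion condition holds vacuously with
  \<open>\<epsilon> = 1/2\<close>: a player who sent \<open>m\<^sub>L\<close> (resp. \<open>m\<^sub>R\<close>) has no cutoff within 1/2 of 1
  (resp. 0) that is not equivalent to it, and under both \<open>\<xi>\<^sub>L\<close> and \<open>\<xi>\<^sub>R\<close> some player is
  in that position.\<close>

lemma integral_pos_if_pos_on_interior:
  fixes g :: "real \<Rightarrow> real"
  assumes "a < b" and g: "g integrable_on {a..b}"
    and nonneg: "\<And>u. u \<in> {a..b} \<Longrightarrow> 0 \<le> g u" and pos: "\<And>u. u \<in> {a<..<b} \<Longrightarrow> 0 < g u"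
  shows "0 < integral {a..b} g"
proof (rule ccontr)
  assume "\<not> 0 < integral {a..b} g"
  moreover have "0 \<le> integral {a..b} g"
    using g nonneg by (rule integral_nonneg)
  ultimately have "integral {a..b} g = 0"
    by linarith
  moreover have L: "integrable (lebesgue_on {a..b}) g"
    using nonnegative_absolutely_integrable_1[OF g nonneg] by (simp add: absolutely_integrable_imp_integrable)
  ultimately have "integral\<^sup>L (lebesgue_on {a..b}) g = 0"
    by (simp add: lebesgue_integral_eq_integral)
  then have "AE u in lebesgue_on {a..b}. g u = 0"
    using L nonneg by (subst (asm) integral_nonneg_eq_0_iff_AE) (auto intro!: AE_I2)
  then have "AE u in lebesgue_on {a..b}. u \<notin> {a<..<b}"
    by eventually_elim (use pos in fastforce)
  then have "emeasure (lebesgue_on {a..b}) {a<..<b} = 0"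
    by (subst (asm) AE_iff_measurable[where N="{a<..<b}"]) (auto simp: sets_restrict_space_iff)
  then have "emeasure lebesgue {a<..<b} = 0"
    by (subst (asm) emeasure_restrict_space) auto
  then show False
    using \<open>a < b\<close> by simp
qed

lemma integral_initial_interval_less:
  fixes g :: "real \<Rightarrow> real"
  assumes "a < b" "c < b" and g: "g integrable_on {a..b}"
    and nonneg: "\<And>u. u \<in> {a..b} \<Longrightarrow> 0 \<le> g u" and pos: "\<And>u. u \<in> {a<..<b} \<Longrightarrow> 0 < g u"
  shows "integral {a..c} g < integral {a..b} g"
proof (cases "c < a")
  case True
  then show ?thesis
    using integral_pos_if_pos_on_interior[OF \<open>a < b\<close> g nonneg pos] by simp
next
  case False
  have "integral {a..c} g + integral {c..b} g = integral {a..b} g"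
    using False \<open>c < b\<close> g by (intro Henstock_Kurzweil_Integration.integral_combine) auto
  moreover have "0 < integral {c..b} g"
    using False \<open>c < b\<close> nonneg pos
    by (intro integral_pos_if_pos_on_interior integrable_on_subinterval[OF g]) auto
  ultimately show ?thesis
    by linarith
qed

lemma integral_final_interval_less:
  fixes g :: "real \<Rightarrow> real"
  assumes "a < b" "a < c" and g: "g integrable_on {a..b}"
    and nonneg: "\<And>u. u \<in> {a..b} \<Longrightarrow> 0 \<le> g u" and pos: "\<And>u. u \<in> {a<..<b} \<Longrightarrow> 0 < g u"
  shows "integral {c..b} g < integral {a..b} g"
proof (cases "b < c")
  case True
  then show ?thesis
    using integral_pos_if_pos_on_interior[OF \<open>a < b\<close> g nonneg pos] by simp
next
  case False
  have "integral {a..c} g + integral {c..b} g = integral {a..b} g"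
    using False \<open>a < c\<close> g by (intro Henstock_Kurzweil_Integration.integral_combine) auto
  moreover have "0 < integral {a..c} g"
    using False \<open>a < c\<close> nonneg pos
    by (intro integral_pos_if_pos_on_interior integrable_on_subinterval[OF g]) auto
  ultimately show ?thesis
    by linarith
qed

lemma integrable_continuous_mult_nonneg:
  fixes c f :: "real \<Rightarrow> real"
  assumes "continuous_on {a..b} c" "f integrable_on {a..b}" "\<And>u. u \<in> {a..b} \<Longrightarrow> 0 \<le> f u"
  shows "(\<lambda>u. c u * f u) integrable_on {a..b}"
proof -
  have "(\<lambda>u. c u * f u) absolutely_integrable_on {a..b}"
  proof (rule absolutely_integrable_bounded_measurable_product_real)
    show "c \<in> borel_measurable (lebesgue_on {a..b})"
      using assms by (intro continuous_imp_measurable_on_sets_lebesgue) auto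
    show "bounded (c ` {a..b})"
      using assms by (intro compact_imp_bounded compact_continuous_image) auto
  qed (auto intro!: nonnegative_absolutely_integrable_1 assms)
  then show ?thesis
    using set_lebesgue_integral_eq_integral(1) by blast
qed

definition msg_lower :: "msg \<Rightarrow> real" where
  "msg_lower m = (case m of mL \<Rightarrow> 0 | mR \<Rightarrow> 1/2)"

definition msg_upper :: "msg \<Rightarrow> real" where
  "msg_upper m = (case m of mL \<Rightarrow> 1/2 | mR \<Rightarrow> 1)"

lemma msg_lower_less_upper: "msg_lower m < msg_upper m"
  and msg_lower_nonneg: "0 \<le> msg_lower m"
  and msg_upper_le_one: "msg_upper m \<le> 1"
  by (cases m; simp add: msg_lower_def msg_upper_def)+

lemma greaterThanAtMost_subset_msg_set: "{msg_lower m<..msg_upper m} \<subseteq> msg_set m"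
  and msg_set_subset_atLeastAtMost: "msg_set m \<subseteq> {msg_lower m..msg_upper m}"
  by (cases m; auto simp: msg_set_def msg_lower_def msg_upper_def)+

lemma msg_set_Int_atMost_upper: "msg_upper m \<le> x \<Longrightarrow> msg_set m \<inter> {..x} = msg_set m"
  using msg_set_subset_atLeastAtMost by fastforce

lemma integral_squeezed_set:
  fixes g :: "real \<Rightarrow> 'a::banach"
  assumes "{a<..b} \<subseteq> S" "S \<subseteq> {a..b}"
  shows "integral S g = integral {a..b} g"
  by (rule integral_spike_set; rule negligible_subset[of "{a}"]) (use assms in \<open>force simp: subset_iff\<close>)+

lemma integral_squeezed_set_Int_atMost:
  fixes g :: "real \<Rightarrow> 'a::banach"
  assumes "{a<..b} \<subseteq> S" "S \<subseteq> {a..b}"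
  shows "integral (S \<inter> {..x}) g = integral {a..min x b} g"
  by (rule integral_spike_set; rule negligible_subset[of "{a}"]) (use assms in \<open>force simp: subset_iff\<close>)+

lemma integral_squeezed_set_Int_greaterThan:
  fixes g :: "real \<Rightarrow> 'a::banach"
  assumes "{a<..b} \<subseteq> S" "S \<subseteq> {a..b}"
  shows "integral (S \<inter> {x<..}) g = integral {max x a..b} g"
  by (rule integral_spike_set; rule negligible_subset[of "{a, x}"]) (use assms in \<open>force simp: subset_iff\<close>)+

lemmas integral_msg_set =
    integral_squeezed_set[OF greaterThanAtMost_subset_msg_set msg_set_subset_atLeastAtMost]
  and integral_msg_set_Int_atMost =
    integral_squeezed_set_Int_atMost[OF greaterThanAtMost_subset_msg_set msg_set_subset_atLeastAtMost]
  and integral_msg_set_Int_greaterThan =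
    integral_squeezed_set_Int_greaterThan[OF greaterThanAtMost_subset_msg_set msg_set_subset_atLeastAtMost]

context
  fixes g :: "real \<Rightarrow> real"
  assumes g: "g integrable_on {0..1}"
    and nonneg: "\<And>u. u \<in> {0..1} \<Longrightarrow> 0 \<le> g u" and pos: "\<And>u. u \<in> {0<..<1} \<Longrightarrow> 0 < g u"
begin

lemma msg_interval_weight:
  "g integrable_on {msg_lower m..msg_upper m}"
  "\<And>u. u \<in> {msg_lower m..msg_upper m} \<Longrightarrow> 0 \<le> g u"
  "\<And>u. u \<in> {msg_lower m<..<msg_upper m} \<Longrightarrow> 0 < g u"
  using msg_lower_nonneg[of m] msg_upper_le_one[of m]
  by (auto intro!: integrable_on_subinterval[OF g] nonneg pos)

lemma integral_msg_set_pos: "0 < integral (msg_set m) g"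
  unfolding integral_msg_set
  by (rule integral_pos_if_pos_on_interior[OF msg_lower_less_upper msg_interval_weight])

lemma integral_msg_set_Int_atMost_less:
  "x < msg_upper m \<Longrightarrow> integral (msg_set m \<inter> {..x}) g < integral (msg_set m) g"
  unfolding integral_msg_set integral_msg_set_Int_atMost
  by (rule integral_initial_interval_less[OF msg_lower_less_upper _ msg_interval_weight]) simp

lemma integral_msg_set_Int_greaterThan_less:
  "msg_lower m < x \<Longrightarrow> integral (msg_set m \<inter> {x<..}) g < integral (msg_set m) g"
  unfolding integral_msg_set integral_msg_set_Int_greaterThan
  by (rule integral_final_interval_less[OF msg_lower_less_upper _ msg_interval_weight]) simp

lemma integral_msg_set_Int_greaterThan_lower:
  "x \<le> msg_lower m \<Longrightarrow> integral (msg_set m \<inter> {x<..}) g = integral (msg_set m) g"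
  unfolding integral_msg_set integral_msg_set_Int_greaterThan by (simp add: max_absorb2)

lemma integral_msg_set_Int_atMost_eq_0_iff:
  "integral (msg_set m \<inter> {..x}) g = 0 \<longleftrightarrow> x \<le> msg_lower m"
proof
  assume "x \<le> msg_lower m"
  then have "negligible {msg_lower m..min x (msg_upper m)}"
    using msg_lower_less_upper[of m] by (cases "x = msg_lower m") auto
  then show "integral (msg_set m \<inter> {..x}) g = 0"
    unfolding integral_msg_set_Int_atMost by (rule integral_negligible)
next
  assume "integral (msg_set m \<inter> {..x}) g = 0"
  moreover have "0 < integral (msg_set m \<inter> {..x}) g" if "msg_lower m < x"
    unfolding integral_msg_set_Int_atMost
  proof (rule integral_pos_if_pos_on_interior)
    show "msg_lower m < min x (msg_upper m)"
      using that msg_lower_less_upper[of m] by simp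
    show "g integrable_on {msg_lower m..min x (msg_upper m)}"
      by (rule integrable_on_subinterval[OF msg_interval_weight(1)]) auto
  qed (use msg_interval_weight in auto)
  ultimately show "x \<le> msg_lower m"
    by fastforce
qed

end

context
  fixes f :: "real \<Rightarrow> real"
  assumes f: "f integrable_on {0..1}" and f_pos: "\<forall>u\<in>{0..1}. 0 < f u"
begin

lemma density_weight: "f integrable_on {0..1}" "\<And>u. u \<in> {0..1} \<Longrightarrow> 0 \<le> f u"
  "\<And>u. u \<in> {0<..<1} \<Longrightarrow> 0 < f u"
  using f f_pos by (auto intro: less_imp_le)

lemma payoff_weights:
  shows "(\<lambda>u. (1 - u) * f u) integrable_on {0..1}"
    and "\<And>u. u \<in> {0..1} \<Longrightarrow> 0 \<le> (1 - u) * f u"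
    and "\<And>u. u \<in> {0<..<1} \<Longrightarrow> 0 < (1 - u) * f u"
    and "(\<lambda>u. u * f u) integrable_on {0..1}"
    and "\<And>u. u \<in> {0..1} \<Longrightarrow> 0 \<le> u * f u"
    and "\<And>u. u \<in> {0<..<1} \<Longrightarrow> 0 < u * f u"
  using f_pos density_weight
  by (auto intro!: integrable_continuous_mult_nonneg continuous_intros)

lemma msg_mass_pos: "0 < msg_mass f m"
  unfolding msg_mass_def by (rule integral_msg_set_pos[OF density_weight])

lemma cond_cdf_eq_0_iff: "cond_cdf f m x = 0 \<longleftrightarrow> x \<le> msg_lower m"
  using msg_mass_pos[of m] integral_msg_set_Int_atMost_eq_0_iff[OF density_weight]
  by (simp add: cond_cdf_def)

lemma cond_cdf_eq_1_iff: "cond_cdf f m x = 1 \<longleftrightarrow> msg_upper m \<le> x"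
proof -
  have "cond_cdf f m x = 1 \<longleftrightarrow> integral (msg_set m \<inter> {..x}) f = integral (msg_set m) f"
    using msg_mass_pos[of m] by (auto simp: cond_cdf_def msg_mass_def)
  also have "\<dots> \<longleftrightarrow> msg_upper m \<le> x"
    using integral_msg_set_Int_atMost_less[OF density_weight, of x m] msg_set_Int_atMost_upper[of m x]
    by (cases "msg_upper m \<le> x") auto
  finally show ?thesis .
qed

lemma cond_cdf_one: "cond_cdf f m 1 = 1"
  using msg_upper_le_one by (simp add: cond_cdf_eq_1_iff)

lemma cond_cdf_zero: "cond_cdf f m 0 = 0"
  using msg_lower_nonneg by (simp add: cond_cdf_eq_0_iff)

lemma equiv_cutoff_one_iff: "equiv_cutoff f m x 1 \<longleftrightarrow> msg_upper m \<le> x"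
  by (simp add: equiv_cutoff_def cond_cdf_one cond_cdf_eq_1_iff)

lemma equiv_cutoff_zero_iff: "equiv_cutoff f m x 0 \<longleftrightarrow> x \<le> msg_lower m"
  by (simp add: equiv_cutoff_def cond_cdf_zero cond_cdf_eq_0_iff)

lemma payoff_if_opponent_left:
  assumes "cond_cdf f m2 x2 = 1"
  shows "payoff f m1 m2 x x2 = integral (msg_set m1 \<inter> {..x}) (\<lambda>u. (1 - u) * f u) / msg_mass f m1"
proof -
  have "(\<lambda>u. (if u \<le> x then (1 - u) * cond_cdf f m2 x2 else u * (1 - cond_cdf f m2 x2)) * f u)
      = (\<lambda>u. if u \<in> {..x} then (1 - u) * f u else 0)"
    using assms by auto
  then show ?thesis
    unfolding payoff_def by (simp only: integral_restrict_Int Int_commute)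
qed

lemma payoff_if_opponent_right:
  assumes "cond_cdf f m2 x2 = 0"
  shows "payoff f m1 m2 x x2 = integral (msg_set m1 \<inter> {x<..}) (\<lambda>u. u * f u) / msg_mass f m1"
proof -
  have "(\<lambda>u. (if u \<le> x then (1 - u) * cond_cdf f m2 x2 else u * (1 - cond_cdf f m2 x2)) * f u)
      = (\<lambda>u. if u \<in> {x<..} then u * f u else 0)"
    using assms by auto
  then show ?thesis
    unfolding payoff_def by (simp only: integral_restrict_Int Int_commute)
qed

lemma best_response_to_left:
  assumes "cond_cdf f m2 x2 = 1" and "payoff f m1 m2 1 x2 \<le> payoff f m1 m2 x x2"
  shows "msg_upper m1 \<le> x"
proof (rule ccontr)
  assume "\<not> msg_upper m1 \<le> x"
  then have "integral (msg_set m1 \<inter> {..x}) (\<lambda>u. (1 - u) * f u)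
      < integral (msg_set m1 \<inter> {..1}) (\<lambda>u. (1 - u) * f u)"
    using integral_msg_set_Int_atMost_less[OF payoff_weights(1-3)]
    by (simp add: msg_set_Int_atMost_upper msg_upper_le_one)
  then show False
    using assms msg_mass_pos[of m1] by (simp add: payoff_if_opponent_left divide_le_cancel)
qed

lemma best_response_to_right:
  assumes "cond_cdf f m2 x2 = 0" and "payoff f m1 m2 0 x2 \<le> payoff f m1 m2 x x2"
  shows "x \<le> msg_lower m1"
proof (rule ccontr)
  assume "\<not> x \<le> msg_lower m1"
  then have "integral (msg_set m1 \<inter> {x<..}) (\<lambda>u. u * f u)
      < integral (msg_set m1 \<inter> {0<..}) (\<lambda>u. u * f u)"
    using integral_msg_set_Int_greaterThan_less[OF payoff_weights(4-6)]
      integral_msg_set_Int_greaterThan_lower[OF payoff_weights(4-6) msg_lower_nonneg]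
    by simp
  then show False
    using assms msg_mass_pos[of m1] by (simp add: payoff_if_opponent_right divide_le_cancel)
qed

lemma strict_equilibrium_left: "strict_equilibrium f m1 m2 1 1"
  using best_response_to_left[OF cond_cdf_one]
  unfolding strict_equilibrium_def equiv_cutoff_one_iff by auto

lemma strict_equilibrium_right: "strict_equilibrium f m1 m2 0 0"
  using best_response_to_right[OF cond_cdf_zero]
  unfolding strict_equilibrium_def equiv_cutoff_zero_iff by auto

lemma NIS_left:
  assumes "m1 = mL \<or> m2 = mL"
  shows "NIS f m1 m2 1 1"
proof -
  have "equiv_cutoff f mL x 1" if "\<bar>x - 1\<bar> < 1/2" for x
    using that[unfolded abs_less_iff] by (simp add: equiv_cutoff_one_iff msg_upper_def)
  then show ?thesis
    using assms strict_equilibrium_left unfolding NIS_def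
    by (intro conjI exI[where x="1/2"]) auto
qed

lemma NIS_right:
  assumes "m1 = mR \<or> m2 = mR"
  shows "NIS f m1 m2 0 0"
proof -
  have "equiv_cutoff f mR x 0" if "\<bar>x - 0\<bar> < 1/2" for x
    using that[unfolded abs_less_iff] by (simp add: equiv_cutoff_zero_iff msg_lower_def)
  then show ?thesis
    using assms strict_equilibrium_right unfolding NIS_def
    by (intro conjI exI[where x="1/2"]) auto
qed

end

theorem mainTheorem13:
  fixes f :: "real \<Rightarrow> real" and m1 m2 :: msg
  assumes "f integrable_on {0..1}"
    and "\<forall>u\<in>{0..1}. f u > 0"
    and "integral {0..1} f = 1"
  shows "strict_equilibrium f m1 m2 (xiL m1 m2) (xiL m2 m1) \<and> NIS f m1 m2 (xiL m1 m2) (xiL m2 m1) \<and>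
         strict_equilibrium f m1 m2 (xiR m1 m2) (xiR m2 m1) \<and> NIS f m1 m2 (xiR m1 m2) (xiR m2 m1)"
  using strict_equilibrium_left[OF assms(1,2)] strict_equilibrium_right[OF assms(1,2)]
    NIS_left[OF assms(1,2)] NIS_right[OF assms(1,2)]
  by (cases m1; cases m2) (auto simp: xiL_def xiR_def)

end
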